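(* Let $f\colon\mathbb{R}^n\to\mathbb{R}$ be convex and differentiable with $\|\nabla f(x)-\nabla f(y)\|\le L\|x-y\|$ (Euclidean norm, $L>0$), with a minimizer $x_\star$, $f_\star=f(x_\star)$. Let $\theta_{-1}=0$, $\theta_0=1$, $\theta_{k+1}>0$ with $\theta_{k+1}^2-\theta_{k+1}=\theta_k^2$ for $k\ge0$, and $\varphi_k>0$ with $\varphi_k^2-\varphi_k=2\theta_{k-1}^2$ for $k\ge0$. Given $x_0$, let $y_0=\tilde x_0=x_0$ and for $k\ge0$: \[ y_{k+1}=x_k-\tfrac1L\nabla f(x_k),\quad x_{k+1}=y_{k+1}+\tfrac{\theta_k-1}{\theta_{k+1}}(y_{k+1}-y_k)+\tfrac{\theta_k}{\theta_{k+1}}(y_{k+1}-x_k),\quad \tilde x_{k+1}=y_{k+1}+\tfrac{\theta_k-1}{\varphi_{k+1}}(y_{k+1}-y_k)+\tfrac{\theta_k}{\varphi_{k+1}}(y_{k+1}-x_k). \] Then for $k=0,1,\dots$, \[ f(\tilde x_k)-f_\star\le\frac{L\|x_0-x_\star\|^2}{2\varphi_k^2}=\frac{L\|x_0-x_\star\|^2}{(k+\zeta+1/\sqrt2)^2}-\frac{L\|x_0-x_\star\|^2\log k}{(k+\zeta+1/\sqrt2)^3}+o\!\left(\frac1{k^3}\right), \] where $\zeta$ is the constant defined in the context (the asymptotic expansion refers to $k\to\infty$).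
   Context: For this sequence $\{\theta_k\}$ the limit $\zeta:=\lim_{k\to\infty}\big(2\theta_k-k-1-\tfrac12\log k\big)$ exists, with $\zeta\approx0.646$. $\log$ is the natural logarithm. *)

theory Defs
  imports "HOL-Analysis.Analysis" "HOL-Library.Landau_Symbols"
begin

definition zeta_of :: "(nat \<Rightarrow> real) \<Rightarrow> real" where
  "zeta_of \<theta> = lim (\<lambda>k. 2 * \<theta> k - real k - 1 - ln (real k) / 2)"

end

theory Submission
  imports Defs "HOL-Real_Asymp.Real_Asymp"
begin

text \<open>
  The bound comes from a potential function for the optimized gradient method. With
  z k = \<theta> k x k - (\<theta> k - 1) y k, both x (k+1) and xt (k+1) lie on the line through y (k+1) and
  z (k+1), and z (k+1) = z k - (2 \<theta> k / L) \<nabla>f (x k). Adding the cocoercivity inequalities of \<nabla>f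
  at (x k, x (k+1)) and at (xs, x (k+1)) with weights (\<theta> k)^2 and \<theta> (k+1) shows that
  2 (\<theta> k)^2 (f (x k) - f xs - |\<nabla>f (x k)|^2 / (2 L)) + L/2 |z (k+1) - xs|^2 never increases; the same sum
  with xt (k+1) and \<phi> (k+1) in place of x (k+1) and \<theta> (k+1) bounds (\<phi> (k+1))^2 (f (xt (k+1)) - f xs) by it.

  For the asymptotics, 2 \<theta> (k+1) - 1 = sqrt ((2 \<theta> k)^2 + 1) makes the increments of
  2 \<theta> k - k - 1 - (log k)/2 of order k powr (-3/2), so this sequence converges to \<zeta>, while
  sqrt 2 \<phi> (k+1) = 1/sqrt 2 + sqrt ((2 \<theta> k)^2 + 1/2) = 2 \<theta> k + 1/sqrt 2 + O(1/k). Hence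
  sqrt 2 \<phi> k = k + \<zeta> + 1/sqrt 2 + (log k)/2 + o(1), and expanding 1/(sqrt 2 \<phi> k)^2 around
  k + \<zeta> + 1/sqrt 2 gives the stated expansion.
\<close>

section \<open>Smooth convex functions\<close>

lemma has_real_derivative_along_line:
  assumes "(f has_derivative (\<lambda>h. g \<bullet> h)) (at (x + t *\<^sub>R d))"
  shows "((\<lambda>t. f (x + t *\<^sub>R d)) has_real_derivative (g \<bullet> d)) (at t)"
proof -
  have "((\<lambda>t. x + t *\<^sub>R d) has_derivative (\<lambda>h. h *\<^sub>R d)) (at t)"
    by (auto intro!: derivative_eq_intros)
  from has_derivative_compose[OF this assms] show ?thesis
    by (auto intro: has_derivative_imp_has_field_derivative simp: o_def)
qed

lemma convex_on_line:
  assumes "convex_on UNIV f"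
  shows "convex_on UNIV (\<lambda>t::real. f (x + t *\<^sub>R d))"
proof (rule convex_onI)
  fix s a b :: real assume "0 < s" "s < 1"
  have "x + ((1 - s) *\<^sub>R a + s *\<^sub>R b) *\<^sub>R d = (1 - s) *\<^sub>R (x + a *\<^sub>R d) + s *\<^sub>R (x + b *\<^sub>R d)"
    by (simp add: algebra_simps)
  with convex_onD[OF assms, of s "x + a *\<^sub>R d" "x + b *\<^sub>R d"] \<open>0 < s\<close> \<open>s < 1\<close>
  show "f (x + ((1 - s) *\<^sub>R a + s *\<^sub>R b) *\<^sub>R d) \<le> (1 - s) * f (x + a *\<^sub>R d) + s * f (x + b *\<^sub>R d)"
    by simp
qed simp

locale L_smooth =
  fixes f :: "'a::real_inner \<Rightarrow> real" and grad :: "'a \<Rightarrow> 'a" and L :: real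
  assumes has_derivative_grad: "(f has_derivative (\<lambda>h. grad z \<bullet> h)) (at z)"
    and grad_lipschitz: "norm (grad u - grad v) \<le> L * norm (u - v)"
begin

lemma descent_lemma: "f y \<le> f x + grad x \<bullet> (y - x) + L / 2 * norm (y - x) ^ 2"
proof -
  define d where "d = y - x"
  define h where "h t = f (x + t *\<^sub>R d) - t * (grad x \<bullet> d) - L / 2 * t ^ 2 * norm d ^ 2" for t
  have "h 1 \<le> h 0"
  proof (rule DERIV_nonpos_imp_nonincreasing[of 0 1 h])
    fix t :: real assume t: "0 \<le> t" "t \<le> 1"
    let ?h' = "(grad (x + t *\<^sub>R d) - grad x) \<bullet> d - L * t * norm d ^ 2"
    have "(h has_real_derivative ?h') (at t)"
      unfolding h_def
      by (auto intro!: derivative_eq_intros has_real_derivative_along_line has_derivative_grad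
          simp: inner_diff_left power2_eq_square)
    moreover have "(grad (x + t *\<^sub>R d) - grad x) \<bullet> d \<le> L * norm (t *\<^sub>R d) * norm d"
      using norm_cauchy_schwarz[of "grad (x + t *\<^sub>R d) - grad x" d]
        mult_right_mono[OF grad_lipschitz[of "x + t *\<^sub>R d" x] norm_ge_zero[of d]]
      by simp
    ultimately show "\<exists>y. (h has_real_derivative y) (at t) \<and> y \<le> 0"
      using t by (auto simp: power2_eq_square mult.assoc)
  qed simp
  then show ?thesis
    by (simp add: h_def d_def algebra_simps)
qed

lemma grad_eq_0_if_minimizer:
  assumes "\<And>u. f xs \<le> f u"
  shows "grad xs = 0"
proof -
  have "(\<lambda>h. grad xs \<bullet> h) = (\<lambda>h. 0)"
    using assms by (intro differential_zero_maxmin[OF _ open_UNIV has_derivative_grad]) auto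
  then show ?thesis
    by (metis inner_eq_zero_iff)
qed

end

lemma norm_diff_scaleR_square:
  fixes w g :: "'a::real_inner"
  assumes "L \<noteq> 0"
  shows "L / 2 * norm (w - (c / L) *\<^sub>R g) ^ 2 = L / 2 * norm w ^ 2 - c * (g \<bullet> w) + c ^ 2 / (2 * L) * norm g ^ 2"
  using assms unfolding power2_norm_eq_inner
  by (simp add: inner_diff_left inner_diff_right inner_commute power2_eq_square field_simps)

locale convex_L_smooth = L_smooth +
  assumes convex: "convex_on UNIV f"
    and L_pos: "L > 0"
begin

lemma gradient_inequality: "f x + grad x \<bullet> (y - x) \<le> f y"
  using convex_on_imp_above_tangent[OF convex_on_line[OF convex, of x "y - x"], of 0 1]
    has_real_derivative_along_line[of f "grad x" x 0 "y - x"] has_derivative_grad[of x]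
  by fastforce

lemma cocoercivity: "f b + grad b \<bullet> (a - b) + norm (grad a - grad b) ^ 2 / (2 * L) \<le> f a"
proof -
  define g where "g = grad a - grad b"
  define w where "w = a - (1 / L) *\<^sub>R g"
  have "f b + grad b \<bullet> (w - b) \<le> f w"
    by (rule gradient_inequality)
  also have "f w \<le> f a + grad a \<bullet> (w - a) + L / 2 * norm (w - a) ^ 2"
    by (rule descent_lemma)
  moreover have "grad b \<bullet> (w - b) = grad b \<bullet> (a - b) - (grad b \<bullet> g) / L"
    and "grad a \<bullet> (w - a) = - (grad a \<bullet> g) / L"
    and "L / 2 * norm (w - a) ^ 2 = norm g ^ 2 / (2 * L)"
    using L_pos by (auto simp: w_def inner_diff_right power2_eq_square)
  ultimately have "f b + grad b \<bullet> (a - b) - (grad b \<bullet> g) / L \<le> f a - (grad a \<bullet> g) / L + norm g ^ 2 / (2 * L)"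
    by simp
  moreover have "(grad a \<bullet> g) / L - (grad b \<bullet> g) / L = 2 * (norm g ^ 2 / (2 * L))"
    using L_pos by (simp add: g_def power2_norm_eq_inner inner_diff_left field_simps)
  ultimately show ?thesis
    unfolding g_def by linarith
qed

definition gradient_step :: "'a \<Rightarrow> 'a" where
  "gradient_step u = u - (1 / L) *\<^sub>R grad u"

text \<open>Add the cocoercivity inequalities at (xk, p) and at (xs, p) with weights c^2 - c and c:
  since zn - p = (c - 1) (p - gradient_step xk), all inner products with grad p cancel.\<close>

lemma ogm_key_inequality:
  assumes "grad xs = 0" and "1 \<le> c"
    and zn: "zn = gradient_step xk + c *\<^sub>R (p - gradient_step xk)"
  shows "c ^ 2 * (f p - f xs + norm (grad p) ^ 2 / (2 * L)) - c * (grad p \<bullet> (zn - xs))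
    \<le> (c ^ 2 - c) * (f xk - f xs - norm (grad xk) ^ 2 / (2 * L))"
proof -
  have "f p + grad p \<bullet> (xk - p) + norm (grad xk - grad p) ^ 2 / (2 * L) \<le> f xk"
    by (rule cocoercivity)
  moreover have "f p + grad p \<bullet> (xs - p) + norm (grad p) ^ 2 / (2 * L) \<le> f xs"
    using cocoercivity[of p xs] \<open>grad xs = 0\<close> by simp
  ultimately have "0 \<le> (c ^ 2 - c) * (f xk - (f p + grad p \<bullet> (xk - p) + norm (grad xk - grad p) ^ 2 / (2 * L)))
      + c * (f xs - (f p + grad p \<bullet> (xs - p) + norm (grad p) ^ 2 / (2 * L)))"
    using \<open>1 \<le> c\<close> by (intro add_nonneg_nonneg mult_nonneg_nonneg) (auto simp: power2_eq_square)
  also have "\<dots> = (c ^ 2 - c) * (f xk - f xs - norm (grad xk) ^ 2 / (2 * L))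
      - (c ^ 2 * (f p - f xs + norm (grad p) ^ 2 / (2 * L)) - c * (grad p \<bullet> (zn - xs)))"
    using L_pos unfolding zn gradient_step_def power2_norm_eq_inner
    by (simp add: inner_simps inner_commute power2_eq_square field_simps)
  finally show ?thesis by simp
qed

lemma ogm_potential_step:
  assumes "grad xs = 0" and "1 \<le> c"
    and "zn = gradient_step xk + c *\<^sub>R (p - gradient_step xk)"
  shows "2 * c ^ 2 * (f p - f xs - norm (grad p) ^ 2 / (2 * L)) + L / 2 * norm (zn - (2 * c / L) *\<^sub>R grad p - xs) ^ 2
    \<le> 2 * (c ^ 2 - c) * (f xk - f xs - norm (grad xk) ^ 2 / (2 * L)) + L / 2 * norm (zn - xs) ^ 2"
proof -
  have "L / 2 * norm (zn - (2 * c / L) *\<^sub>R grad p - xs) ^ 2 = L / 2 * norm ((zn - xs) - (2 * c / L) *\<^sub>R grad p) ^ 2"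
    by (simp add: algebra_simps)
  also have "\<dots> = L / 2 * norm (zn - xs) ^ 2 - 2 * c * (grad p \<bullet> (zn - xs)) + (2 * c) ^ 2 / (2 * L) * norm (grad p) ^ 2"
    using L_pos by (intro norm_diff_scaleR_square) simp
  finally have "2 * c ^ 2 * (f p - f xs - norm (grad p) ^ 2 / (2 * L)) + L / 2 * norm (zn - (2 * c / L) *\<^sub>R grad p - xs) ^ 2
      = 2 * (c ^ 2 * (f p - f xs + norm (grad p) ^ 2 / (2 * L)) - c * (grad p \<bullet> (zn - xs))) + L / 2 * norm (zn - xs) ^ 2"
    using L_pos by (simp add: field_simps)
  also have "\<dots> \<le> 2 * ((c ^ 2 - c) * (f xk - f xs - norm (grad xk) ^ 2 / (2 * L))) + L / 2 * norm (zn - xs) ^ 2"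
    using ogm_key_inequality[OF assms] by simp
  finally show ?thesis
    by (simp only: mult.assoc)
qed

lemma ogm_final_step:
  assumes "grad xs = 0" and "1 \<le> c"
    and "zn = gradient_step xk + c *\<^sub>R (p - gradient_step xk)"
  shows "c ^ 2 * (f p - f xs) \<le> (c ^ 2 - c) * (f xk - f xs - norm (grad xk) ^ 2 / (2 * L)) + L / 2 * norm (zn - xs) ^ 2"
proof -
  have "c ^ 2 * (f p - f xs) \<le> c ^ 2 * (f p - f xs) + L / 2 * norm (zn - xs - (c / L) *\<^sub>R grad p) ^ 2"
    using L_pos by simp
  also have "\<dots> = c ^ 2 * (f p - f xs + norm (grad p) ^ 2 / (2 * L)) - c * (grad p \<bullet> (zn - xs)) + L / 2 * norm (zn - xs) ^ 2"
    using L_pos by (subst norm_diff_scaleR_square) (simp_all add: field_simps)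
  finally show ?thesis
    using ogm_key_inequality[OF assms] by simp
qed

end

section \<open>The optimized gradient method\<close>

locale theta_sequence =
  fixes \<theta> :: "nat \<Rightarrow> real"
  assumes theta_0: "\<theta> 0 = 1"
    and theta_Suc_pos: "\<theta> (Suc k) > 0"
    and theta_Suc: "\<theta> (Suc k) ^ 2 - \<theta> (Suc k) = \<theta> k ^ 2"
begin

lemma theta_ge_1: "1 \<le> \<theta> k"
proof (cases k)
  case (Suc j)
  have "0 \<le> \<theta> k * (\<theta> k - 1)"
    using theta_Suc[of j] by (simp add: Suc power2_eq_square algebra_simps)
  with theta_Suc_pos[of j] Suc show ?thesis
    by (simp add: zero_le_mult_iff)
qed (simp add: theta_0)

end

locale phi_sequence = theta_sequence +
  fixes \<phi> :: "nat \<Rightarrow> real"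
  assumes phi_pos: "\<phi> k > 0"
    and phi_0: "\<phi> 0 = 1"
    and phi_Suc: "\<phi> (Suc k) ^ 2 - \<phi> (Suc k) = 2 * \<theta> k ^ 2"
begin

lemma phi_ge_1: "1 \<le> \<phi> k"
proof (cases k)
  case (Suc j)
  have "0 \<le> \<phi> k * (\<phi> k - 1)"
    using phi_Suc[of j] by (simp add: Suc power2_eq_square algebra_simps)
  with phi_pos[of k] show ?thesis
    by (simp add: zero_le_mult_iff)
qed (simp add: phi_0)

end

locale ogm = convex_L_smooth f grad L + phi_sequence \<theta> \<phi>
  for f :: "'a::real_inner \<Rightarrow> real" and grad L \<theta> \<phi> +
  fixes xs :: 'a and x y xt :: "nat \<Rightarrow> 'a"
  assumes minimizer: "f xs \<le> f u"
    and xt_0: "xt 0 = x 0"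
    and y_Suc: "y (Suc k) = x k - (1 / L) *\<^sub>R grad (x k)"
    and x_Suc: "x (Suc k) = y (Suc k)
                 + ((\<theta> k - 1) / \<theta> (Suc k)) *\<^sub>R (y (Suc k) - y k)
                 + (\<theta> k / \<theta> (Suc k)) *\<^sub>R (y (Suc k) - x k)"
    and xt_Suc: "xt (Suc k) = y (Suc k)
                 + ((\<theta> k - 1) / \<phi> (Suc k)) *\<^sub>R (y (Suc k) - y k)
                 + (\<theta> k / \<phi> (Suc k)) *\<^sub>R (y (Suc k) - x k)"
begin

lemma grad_xs_eq_0: "grad xs = 0"
  using grad_eq_0_if_minimizer minimizer by blast

definition z :: "nat \<Rightarrow> 'a" where
  "z k = \<theta> k *\<^sub>R x k - (\<theta> k - 1) *\<^sub>R y k"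

lemma z_0: "z 0 = x 0"
  by (simp add: z_def theta_0)

lemma y_Suc_eq_gradient_step: "y (Suc k) = gradient_step (x k)"
  by (simp add: y_Suc gradient_step_def)

lemma z_Suc_eq_x: "z (Suc k) = gradient_step (x k) + \<theta> (Suc k) *\<^sub>R (x (Suc k) - gradient_step (x k))"
  by (simp add: z_def y_Suc_eq_gradient_step algebra_simps)

lemma z_Suc_eq_xt: "z (Suc k) = gradient_step (x k) + \<phi> (Suc k) *\<^sub>R (xt (Suc k) - gradient_step (x k))"
proof -
  have "\<theta> (Suc k) *\<^sub>R (x (Suc k) - y (Suc k)) = \<phi> (Suc k) *\<^sub>R (xt (Suc k) - y (Suc k))"
    using theta_Suc_pos[of k] phi_pos[of "Suc k"] by (simp add: x_Suc xt_Suc scaleR_add_right)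
  then show ?thesis
    by (simp add: z_def y_Suc_eq_gradient_step[symmetric] algebra_simps)
qed

lemma z_Suc: "z (Suc k) = z k - (2 * \<theta> k / L) *\<^sub>R grad (x k)"
proof -
  have "\<theta> (Suc k) *\<^sub>R x (Suc k) = \<theta> (Suc k) *\<^sub>R y (Suc k) + (\<theta> k - 1) *\<^sub>R (y (Suc k) - y k)
      + \<theta> k *\<^sub>R (y (Suc k) - x k)"
    using theta_Suc_pos[of k] by (simp add: x_Suc scaleR_add_right)
  then have "z (Suc k) = y (Suc k) + (\<theta> k - 1) *\<^sub>R (y (Suc k) - y k) + \<theta> k *\<^sub>R (y (Suc k) - x k)"
    by (simp add: z_def algebra_simps)
  also have "\<dots> = z k - (2 * \<theta> k / L) *\<^sub>R grad (x k)"
    by (simp add: z_def y_Suc algebra_simps)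
      (simp only: scaleR_add_left[symmetric] add_divide_distrib[symmetric] mult_2_right)
  finally show ?thesis .
qed

definition potential :: "nat \<Rightarrow> real" where
  "potential k = 2 * \<theta> k ^ 2 * (f (x k) - f xs - norm (grad (x k)) ^ 2 / (2 * L))
    + L / 2 * norm (z (Suc k) - xs) ^ 2"

lemma potential_0_le: "potential 0 \<le> L / 2 * norm (x 0 - xs) ^ 2"
  using ogm_potential_step[OF grad_xs_eq_0 order_refl, of "x 0" "x 0" "x 0"]
  by (simp add: potential_def z_Suc z_0 theta_0)

lemma potential_Suc_le: "potential (Suc k) \<le> potential k"
  using ogm_potential_step[OF grad_xs_eq_0 theta_ge_1 z_Suc_eq_x[of k]] theta_Suc[of k]
  by (simp add: potential_def z_Suc[of "Suc k"])

lemma potential_le: "potential k \<le> L / 2 * norm (x 0 - xs) ^ 2"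
  by (induction k) (use potential_0_le potential_Suc_le order_trans in blast)+

theorem ogm_bound: "f (xt k) - f xs \<le> L * norm (x 0 - xs) ^ 2 / (2 * \<phi> k ^ 2)"
proof -
  have "\<phi> k ^ 2 * (f (xt k) - f xs) \<le> L / 2 * norm (x 0 - xs) ^ 2"
  proof (cases k)
    case 0
    then show ?thesis
      using ogm_final_step[OF grad_xs_eq_0 order_refl, of "x 0" "x 0" "x 0"] by (simp add: phi_0 xt_0)
  next
    case (Suc m)
    have "\<phi> k ^ 2 * (f (xt k) - f xs) \<le> potential m"
      using ogm_final_step[OF grad_xs_eq_0 phi_ge_1 z_Suc_eq_xt[of m]] phi_Suc[of m]
      by (simp add: Suc potential_def)
    with potential_le[of m] show ?thesis
      by linarith
  qed
  with phi_pos[of k] show ?thesis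
    by (simp add: field_simps)
qed

end

section \<open>Asymptotics of the coefficients\<close>

lemma sqrt_square_add_minus_bounds:
  fixes t a :: real
  assumes "0 < t" and "0 \<le> a"
  shows "a / (2 * t + sqrt a) \<le> sqrt (t ^ 2 + a) - t" and "sqrt (t ^ 2 + a) - t \<le> a / (2 * t)"
proof -
  define s where "s = sqrt (t ^ 2 + a)"
  have "t \<le> s"
    unfolding s_def using assms by (intro real_le_rsqrt) simp
  moreover have "s \<le> t + sqrt a"
    unfolding s_def using sqrt_add_le_add_sqrt[of "t ^ 2" a] assms by simp
  moreover have "(s - t) * (s + t) = a"
    using assms by (simp add: s_def algebra_simps power2_eq_square[symmetric])
  ultimately have "s - t = a / (s + t)" and "0 < s + t"
    using assms by (auto simp: field_simps)
  moreover note \<open>t \<le> s\<close> \<open>s \<le> t + sqrt a\<close>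
  ultimately show "a / (2 * t + sqrt a) \<le> s - t" and "s - t \<le> a / (2 * t)"
    using assms by (auto intro!: divide_left_mono mult_pos_pos)
qed

lemma inverse_square_diff_eq:
  fixes B \<delta> :: real
  assumes "B \<noteq> 0" and "B + \<delta> \<noteq> 0"
  shows "1 / (B + \<delta>) ^ 2 - 1 / B ^ 2 + 2 * \<delta> / B ^ 3 = (3 * B * \<delta> ^ 2 + 2 * \<delta> ^ 3) / ((B + \<delta>) ^ 2 * B ^ 3)"
proof -
  define A where "A = B + \<delta>"
  have "1 / A ^ 2 - 1 / B ^ 2 + 2 * \<delta> / B ^ 3 = (B ^ 3 - A ^ 2 * B + 2 * \<delta> * A ^ 2) / (A ^ 2 * B ^ 3)"
    using assms unfolding A_def[symmetric] by (simp add: field_simps power2_eq_square power3_eq_cube)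
  also have "B ^ 3 - A ^ 2 * B + 2 * \<delta> * A ^ 2 = 3 * B * \<delta> ^ 2 + 2 * \<delta> ^ 3"
    by (simp add: A_def power2_eq_square power3_eq_cube algebra_simps)
  finally show ?thesis
    by (simp add: A_def)
qed

lemma inverse_square_remainder_le:
  fixes B \<delta> l :: real
  assumes "0 < B" and "\<bar>\<delta>\<bar> \<le> l" and "2 * l \<le> B"
  shows "\<bar>(3 * B * \<delta> ^ 2 + 2 * \<delta> ^ 3) / ((B + \<delta>) ^ 2 * B ^ 3)\<bar> \<le> (3 * B * l ^ 2 + 2 * l ^ 3) / ((B / 2) ^ 2 * B ^ 3)"
proof -
  have "\<bar>3 * B * \<delta> ^ 2 + 2 * \<delta> ^ 3\<bar> \<le> 3 * B * \<bar>\<delta>\<bar> ^ 2 + 2 * \<bar>\<delta>\<bar> ^ 3"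
    using assms(1) by (auto intro!: order_trans[OF abs_triangle_ineq] simp: abs_mult power_abs)
  also have "\<dots> \<le> 3 * B * l ^ 2 + 2 * l ^ 3"
    using assms by (intro add_mono mult_left_mono power_mono) auto
  finally have "\<bar>3 * B * \<delta> ^ 2 + 2 * \<delta> ^ 3\<bar> \<le> 3 * B * l ^ 2 + 2 * l ^ 3" .
  moreover have "(B / 2) ^ 2 * B ^ 3 \<le> (B + \<delta>) ^ 2 * B ^ 3"
    using assms by (intro mult_right_mono power_mono) auto
  ultimately show ?thesis
    using assms by (auto simp: abs_divide intro!: frac_le)
qed

lemma inverse_square_remainder_smallo:
  fixes \<delta> :: "nat \<Rightarrow> real" and c :: real
  assumes "\<forall>\<^sub>F k in at_top. \<bar>\<delta> k\<bar> \<le> ln (real k)"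
  shows "(\<lambda>k. (3 * (real k + c) * \<delta> k ^ 2 + 2 * \<delta> k ^ 3) / ((real k + c + \<delta> k) ^ 2 * (real k + c) ^ 3))
    \<in> o(\<lambda>k. 1 / real k ^ 3)"
proof -
  define G where "G k = (3 * (real k + c) * ln (real k) ^ 2 + 2 * ln (real k) ^ 3)
    / (((real k + c) / 2) ^ 2 * (real k + c) ^ 3)" for k
  have "(\<lambda>k. (3 * (real k + c) * \<delta> k ^ 2 + 2 * \<delta> k ^ 3) / ((real k + c + \<delta> k) ^ 2 * (real k + c) ^ 3)) \<in> O(G)"
  proof (rule landau_o.bigI[of 1])
    have "\<forall>\<^sub>F k in at_top. 0 < real k + c" and "\<forall>\<^sub>F k in at_top. 2 * ln (real k) \<le> real k + c"
      by real_asymp+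
    with assms show "\<forall>\<^sub>F k in at_top. norm ((3 * (real k + c) * \<delta> k ^ 2 + 2 * \<delta> k ^ 3)
        / ((real k + c + \<delta> k) ^ 2 * (real k + c) ^ 3)) \<le> 1 * norm (G k)"
    proof eventually_elim
      case (elim k)
      then show ?case
        using inverse_square_remainder_le[of "real k + c" "\<delta> k" "ln (real k)"]
        unfolding G_def by (auto intro: order_trans)
    qed
  qed simp
  also have "G \<in> o(\<lambda>k. 1 / real k ^ 3)"
    unfolding G_def by real_asymp
  finally show ?thesis .
qed

lemma inverse_square_expansion:
  fixes A :: "nat \<Rightarrow> real" and c :: real
  assumes "(\<lambda>k. A k - (real k + c) - ln (real k) / 2) \<longlonglongrightarrow> 0"
  shows "(\<lambda>k. 1 / A k ^ 2 - (1 / (real k + c) ^ 2 - ln (real k) / (real k + c) ^ 3)) \<in> o(\<lambda>k. 1 / real k ^ 3)"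
proof -
  define B where "B k = real k + c" for k
  define \<delta> where "\<delta> k = A k - B k" for k
  define \<epsilon> where "\<epsilon> k = \<delta> k - ln (real k) / 2" for k
  define R where "R k = (3 * B k * \<delta> k ^ 2 + 2 * \<delta> k ^ 3) / ((B k + \<delta> k) ^ 2 * B k ^ 3)" for k
  have "\<epsilon> = (\<lambda>k. A k - (real k + c) - ln (real k) / 2)"
    by (simp add: fun_eq_iff \<epsilon>_def \<delta>_def B_def)
  with assms have "\<epsilon> \<longlonglongrightarrow> 0"
    by simp
  have "\<forall>\<^sub>F k in at_top. \<bar>\<epsilon> k\<bar> \<le> 1"
    using tendstoD[OF \<open>\<epsilon> \<longlonglongrightarrow> 0\<close>, of 1] by (auto elim!: eventually_mono)
  moreover have ln_ge: "\<forall>\<^sub>F k in at_top. 2 \<le> ln (real k)"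
    by real_asymp
  ultimately have \<delta>_le: "\<forall>\<^sub>F k in at_top. \<bar>\<delta> k\<bar> \<le> ln (real k)"
    by eventually_elim (auto simp: \<epsilon>_def)
  then have "R \<in> o(\<lambda>k. 1 / real k ^ 3)"
    unfolding R_def B_def by (rule inverse_square_remainder_smallo)
  moreover have "(\<lambda>k. \<epsilon> k * (2 / B k ^ 3)) \<in> o(\<lambda>k. 1 * (1 / real k ^ 3))"
  proof (rule landau_o.small_big_mult)
    show "\<epsilon> \<in> o(\<lambda>_. 1)"
      using \<open>\<epsilon> \<longlonglongrightarrow> 0\<close> by (intro smalloI_tendsto) auto
    show "(\<lambda>k. 2 / B k ^ 3) \<in> O(\<lambda>k. 1 / real k ^ 3)"
      unfolding B_def by real_asymp
  qed
  ultimately have "(\<lambda>k. R k - \<epsilon> k * (2 / B k ^ 3)) \<in> o(\<lambda>k. 1 / real k ^ 3)"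
    by (intro sum_in_smallo) simp_all
  moreover have "\<forall>\<^sub>F k in at_top. 2 * ln (real k) \<le> B k"
    unfolding B_def by real_asymp
  with \<delta>_le ln_ge have "\<forall>\<^sub>F k in at_top. R k - \<epsilon> k * (2 / B k ^ 3)
      = 1 / A k ^ 2 - (1 / B k ^ 2 - ln (real k) / B k ^ 3)"
  proof eventually_elim
    case (elim k)
    then have "B k \<noteq> 0" and "B k + \<delta> k \<noteq> 0"
      by auto
    from inverse_square_diff_eq[OF this] have "R k = 1 / A k ^ 2 - 1 / B k ^ 2 + 2 * \<delta> k / B k ^ 3"
      by (simp add: R_def \<delta>_def)
    moreover have "\<epsilon> k * (2 / B k ^ 3) = 2 * \<delta> k / B k ^ 3 - ln (real k) / B k ^ 3"
      using \<open>B k \<noteq> 0\<close> by (simp add: \<epsilon>_def field_simps)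
    ultimately show ?case
      by simp
  qed
  ultimately show ?thesis
    unfolding B_def by (rule landau_o.small.in_cong[THEN iffD1, rotated])
qed

context theta_sequence
begin

lemma theta_Suc_eq_sqrt: "2 * \<theta> (Suc k) - 1 = sqrt ((2 * \<theta> k) ^ 2 + 1)"
  using theta_Suc[of k] theta_ge_1[of "Suc k"]
  by (intro real_sqrt_unique[symmetric]) (auto simp: power2_eq_square algebra_simps)

lemma theta_increment_bounds:
  shows "1 / (4 * \<theta> k + 1) \<le> 2 * \<theta> (Suc k) - 2 * \<theta> k - 1"
    and "2 * \<theta> (Suc k) - 2 * \<theta> k - 1 \<le> 1 / (4 * \<theta> k)"
proof -
  have "2 * \<theta> (Suc k) - 2 * \<theta> k - 1 = sqrt ((2 * \<theta> k) ^ 2 + 1) - 2 * \<theta> k"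
    using theta_Suc_eq_sqrt[of k] by simp
  with sqrt_square_add_minus_bounds[of "2 * \<theta> k" 1] theta_ge_1[of k]
  show "1 / (4 * \<theta> k + 1) \<le> 2 * \<theta> (Suc k) - 2 * \<theta> k - 1"
    and "2 * \<theta> (Suc k) - 2 * \<theta> k - 1 \<le> 1 / (4 * \<theta> k)"
    by simp_all
qed

lemma theta_lower_bound: "real k + 2 \<le> 2 * \<theta> k"
proof (induction k)
  case (Suc k)
  have "0 \<le> 1 / (4 * \<theta> k + 1)"
    using theta_ge_1[of k] by simp
  with Suc theta_increment_bounds(1)[of k] show ?case
    by linarith
qed (simp add: theta_0)

lemma theta_upper_bound: "2 * \<theta> k \<le> real k + 1 + 2 * sqrt (real k + 1)"
proof (induction k)
  case (Suc k)
  define s where "s = sqrt (real k + 1)"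
  have "0 < s" and "s ^ 2 = real k + 1"
    by (simp_all add: s_def)
  have "s \<le> real k + 1"
    unfolding s_def by (intro real_le_lsqrt) (auto simp: power2_eq_square)
  have "1 / (4 * \<theta> k) \<le> 1 / (2 * (real k + 2))"
    using theta_lower_bound[of k] by (intro divide_left_mono) auto
  also have "\<dots> \<le> 2 / (2 * s + 1)"
    using \<open>0 < s\<close> \<open>s \<le> real k + 1\<close> by (intro frac_le) auto
  also have "\<dots> \<le> 2 * sqrt (real k + 2) - 2 * s"
  proof -
    have "1 / (2 * s + 1) \<le> sqrt (s ^ 2 + 1) - s"
      using sqrt_square_add_minus_bounds(1)[OF \<open>0 < s\<close>, of 1] by simp
    then have "1 / (2 * s + 1) \<le> sqrt (real k + 2) - s"
      by (simp add: \<open>s ^ 2 = real k + 1\<close> add.assoc)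
    from mult_left_mono[OF this, of 2] show ?thesis
      by (simp add: algebra_simps)
  qed
  finally have "1 / (4 * \<theta> k) \<le> 2 * sqrt (real k + 2) - 2 * s" .
  then have "2 * \<theta> (Suc k) \<le> real k + 2 + 2 * sqrt (real k + 2)"
    using Suc theta_increment_bounds(2)[of k] unfolding s_def by linarith
  then show ?case
    by (simp add: add.commute)
qed (simp add: theta_0)

definition zeta_approx :: "nat \<Rightarrow> real" where
  "zeta_approx k = 2 * \<theta> k - real k - 1 - ln (real k) / 2"

lemma zeta_approx_increment_bigo:
  "(\<lambda>k. zeta_approx (Suc k) - zeta_approx k) \<in> O(\<lambda>k. real k powr (-3/2))"
proof -
  define l where "l k = (ln (real k + 1) - ln (real k)) / 2" for k
  define lo where "lo k = 1 / (2 * real k + 3 + 4 * sqrt (real k + 1))" for k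
  define hi where "hi k = 1 / (2 * real k + 4)" for k
  have "\<bar>zeta_approx (Suc k) - zeta_approx k\<bar> \<le> \<bar>lo k - l k\<bar> + \<bar>hi k - l k\<bar>" for k
  proof -
    have "lo k \<le> 1 / (4 * \<theta> k + 1)"
      unfolding lo_def using theta_upper_bound[of k] theta_ge_1[of k] by (intro frac_le) auto
    moreover have "1 / (4 * \<theta> k) \<le> hi k"
      unfolding hi_def using theta_lower_bound[of k] by (intro frac_le) auto
    moreover have "zeta_approx (Suc k) - zeta_approx k = (2 * \<theta> (Suc k) - 2 * \<theta> k - 1) - l k"
      by (simp add: zeta_approx_def l_def field_simps)
    ultimately show ?thesis
      using theta_increment_bounds[of k] by linarith
  qed
  then have "(\<lambda>k. zeta_approx (Suc k) - zeta_approx k) \<in> O(\<lambda>k. \<bar>lo k - l k\<bar> + \<bar>hi k - l k\<bar>)"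
    by (intro landau_o.bigI[of 1]) (auto intro: always_eventually)
  also have "(\<lambda>k. \<bar>lo k - l k\<bar> + \<bar>hi k - l k\<bar>) \<in> O(\<lambda>k. real k powr (-3/2))"
    unfolding lo_def hi_def l_def by real_asymp
  finally show ?thesis .
qed

lemma zeta_approx_LIMSEQ: "zeta_approx \<longlonglongrightarrow> zeta_of \<theta>"
proof -
  have "summable (\<lambda>k. norm (real k powr (-3/2)))"
    by (simp add: summable_real_powr_iff)
  then have "summable (\<lambda>k. zeta_approx (Suc k) - zeta_approx k)"
    by (rule summable_comparison_test_bigo[OF _ zeta_approx_increment_bigo])
  then have "(\<lambda>n. zeta_approx 0 + (\<Sum>k<n. zeta_approx (Suc k) - zeta_approx k)) \<longlonglongrightarrow>
      zeta_approx 0 + (\<Sum>k. zeta_approx (Suc k) - zeta_approx k)"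
    by (intro tendsto_intros summable_LIMSEQ)
  then have "convergent zeta_approx"
    by (auto simp: sum_lessThan_telescope convergent_def)
  then show ?thesis
    by (simp add: zeta_of_def zeta_approx_def[abs_def] convergent_LIMSEQ_iff)
qed

end

context phi_sequence
begin

lemma sqrt2_phi_Suc_eq: "sqrt 2 * \<phi> (Suc k) - 1 / sqrt 2 = sqrt ((2 * \<theta> k) ^ 2 + 1 / 2)"
proof (rule real_sqrt_unique[symmetric])
  show "(sqrt 2 * \<phi> (Suc k) - 1 / sqrt 2) ^ 2 = (2 * \<theta> k) ^ 2 + 1 / 2"
    using phi_Suc[of k] by (simp add: power2_eq_square field_simps)
  show "0 \<le> sqrt 2 * \<phi> (Suc k) - 1 / sqrt 2"
    using phi_ge_1[of "Suc k"] by (simp add: field_simps)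
qed

lemma sqrt2_phi_Suc_minus_theta_LIMSEQ:
  "(\<lambda>k. sqrt 2 * \<phi> (Suc k) - (2 * \<theta> k + 1 / sqrt 2)) \<longlonglongrightarrow> 0"
proof (rule Lim_null_comparison)
  show "(\<lambda>k. 1 / (4 * (real k + 2))) \<longlonglongrightarrow> 0"
    by real_asymp
  show "\<forall>\<^sub>F k in sequentially. norm (sqrt 2 * \<phi> (Suc k) - (2 * \<theta> k + 1 / sqrt 2)) \<le> 1 / (4 * (real k + 2))"
  proof (intro always_eventually allI)
    fix k
    have "0 < \<theta> k"
      using theta_ge_1[of k] by simp
    have "0 \<le> sqrt ((2 * \<theta> k) ^ 2 + 1 / 2) - 2 * \<theta> k"
      using real_le_rsqrt[of "2 * \<theta> k" "(2 * \<theta> k) ^ 2 + 1 / 2"] by simp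
    moreover have "sqrt ((2 * \<theta> k) ^ 2 + 1 / 2) - 2 * \<theta> k \<le> 1 / (4 * (2 * \<theta> k))"
      using sqrt_square_add_minus_bounds(2)[of "2 * \<theta> k" "1 / 2"] \<open>0 < \<theta> k\<close> by simp
    moreover have "1 / (4 * (2 * \<theta> k)) \<le> 1 / (4 * (real k + 2))"
      using theta_lower_bound[of k] by (intro divide_left_mono) auto
    ultimately show "norm (sqrt 2 * \<phi> (Suc k) - (2 * \<theta> k + 1 / sqrt 2)) \<le> 1 / (4 * (real k + 2))"
      using sqrt2_phi_Suc_eq[of k] by simp
  qed
qed

lemma sqrt2_phi_asymptotics:
  "(\<lambda>k. sqrt 2 * \<phi> k - (real k + (zeta_of \<theta> + 1 / sqrt 2)) - ln (real k) / 2) \<longlonglongrightarrow> 0"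
proof -
  have "(\<lambda>k. ln (real k) - ln (real k + 1)) \<longlonglongrightarrow> 0"
    by real_asymp
  then have "(\<lambda>k. (sqrt 2 * \<phi> (Suc k) - (2 * \<theta> k + 1 / sqrt 2)) + (zeta_approx k - zeta_of \<theta>)
      + (ln (real k) - ln (real k + 1)) / 2) \<longlonglongrightarrow> 0 + (zeta_of \<theta> - zeta_of \<theta>) + 0 / 2"
    by (intro tendsto_intros sqrt2_phi_Suc_minus_theta_LIMSEQ zeta_approx_LIMSEQ) auto
  then have "(\<lambda>k. sqrt 2 * \<phi> (Suc k) - (real (Suc k) + (zeta_of \<theta> + 1 / sqrt 2)) - ln (real (Suc k)) / 2) \<longlonglongrightarrow> 0"
    by (simp add: zeta_approx_def algebra_simps add_divide_distrib diff_divide_distrib)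
  then show ?thesis
    by (rule LIMSEQ_imp_Suc)
qed

lemma phi_expansion:
  "(\<lambda>k. 1 / (2 * \<phi> k ^ 2) - (1 / (real k + zeta_of \<theta> + 1 / sqrt 2) ^ 2
      - ln (real k) / (real k + zeta_of \<theta> + 1 / sqrt 2) ^ 3)) \<in> o(\<lambda>k. 1 / real k ^ 3)"
  using inverse_square_expansion[OF sqrt2_phi_asymptotics]
  by (simp add: power_mult_distrib add.assoc)

end

theorem corollary3:
  fixes f :: "'a::euclidean_space \<Rightarrow> real"
    and grad :: "'a \<Rightarrow> 'a"
    and L :: real
    and xs :: 'a
    and \<theta> \<phi> :: "nat \<Rightarrow> real"
    and x y xt :: "nat \<Rightarrow> 'a"
  assumes conv: "convex_on UNIV f"
    and grad: "\<And>z. (f has_derivative (\<lambda>h. grad z \<bullet> h)) (at z)"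
    and Lpos: "L > 0"
    and lip: "\<And>u v. norm (grad u - grad v) \<le> L * norm (u - v)"
    and minim: "\<And>z. f xs \<le> f z"
    and th0: "\<theta> 0 = 1"
    and thpos: "\<And>k. \<theta> (Suc k) > 0"
    and threc: "\<And>k. \<theta> (Suc k) ^ 2 - \<theta> (Suc k) = \<theta> k ^ 2"
    and phpos: "\<And>k. \<phi> k > 0"
    and ph0: "\<phi> 0 ^ 2 - \<phi> 0 = 2 * 0 ^ 2"
    and phrec: "\<And>k. \<phi> (Suc k) ^ 2 - \<phi> (Suc k) = 2 * \<theta> k ^ 2"
    and y0: "y 0 = x 0"
    and xt0: "xt 0 = x 0"
    and yrec: "\<And>k. y (Suc k) = x k - (1 / L) *\<^sub>R grad (x k)"
    and xrec: "\<And>k. x (Suc k) = y (Suc k)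
                 + ((\<theta> k - 1) / \<theta> (Suc k)) *\<^sub>R (y (Suc k) - y k)
                 + (\<theta> k / \<theta> (Suc k)) *\<^sub>R (y (Suc k) - x k)"
    and xtrec: "\<And>k. xt (Suc k) = y (Suc k)
                 + ((\<theta> k - 1) / \<phi> (Suc k)) *\<^sub>R (y (Suc k) - y k)
                 + (\<theta> k / \<phi> (Suc k)) *\<^sub>R (y (Suc k) - x k)"
  shows "(\<forall>k. f (xt k) - f xs \<le> L * norm (x 0 - xs) ^ 2 / (2 * \<phi> k ^ 2))
     \<and> (\<lambda>k. L * norm (x 0 - xs) ^ 2 / (2 * \<phi> k ^ 2)
             - (L * norm (x 0 - xs) ^ 2 / (real k + zeta_of \<theta> + 1 / sqrt 2) ^ 2
                - L * norm (x 0 - xs) ^ 2 * ln (real k)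
                    / (real k + zeta_of \<theta> + 1 / sqrt 2) ^ 3))
       \<in> o(\<lambda>k. 1 / real k ^ 3)"
proof -
  have "\<phi> 0 = 1"
    using ph0 phpos[of 0] by (simp add: power2_eq_square)
  then interpret ogm f grad L \<theta> \<phi> xs x y xt
    using conv grad Lpos lip minim th0 thpos threc phpos phrec xt0 yrec xrec xtrec
    by unfold_locales auto
  have "(\<lambda>k. L * norm (x 0 - xs) ^ 2 * (1 / (2 * \<phi> k ^ 2) - (1 / (real k + zeta_of \<theta> + 1 / sqrt 2) ^ 2
      - ln (real k) / (real k + zeta_of \<theta> + 1 / sqrt 2) ^ 3))) \<in> o(\<lambda>k. 1 / real k ^ 3)"
    using phi_expansion by simp
  then show ?thesis
    using ogm_bound by (simp add: algebra_simps)
qed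

end
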